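(* For every virtual knot $K$ there exists a positive integer $n$ such that $K$ can be represented on a $1\times n$ virtual rectangular mosaic (a row mosaic).
   Context: Mosaic tiles are the eleven standard unit-square tiles $T_0,\dots,T_{10}$: $T_0$ is blank; $T_1,\dots,T_4$ each contain a single arc joining the midpoints of two adjacent sides; $T_5$ (horizontal) and $T_6$ (vertical) each contain a single straight segment joining midpoints of opposite sides; $T_7,T_8$ each contain two disjoint arcs, each joining midpoints of two adjacent sides; $T_9,T_{10}$ are the two crossing tiles, containing a horizontal and a vertical segment crossing at the center, with the vertical strand over in one and the horizontal strand over in the other. A virtual rectangular mosaic is an $m\times n$ array of such tiles together with a pairing (with orientation) of the $2(m+n)$ boundary unit edges of the array such that the quotient ("closure") is a closed orientable surface $\Sigma_D$ carrying a knot or link diagram $D$; this represents a virtual knot/link (a knot diagram on a closed orientable surface up to stable equivalence; equivalently, a virtual knot diagram up to generalized Reidemeister moves, with interlocking boundary edge pairs giving virtual crossings). A row mosaic is a $1\times n$ virtual rectangular mosaic. *)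

theory Defs
  imports Main
begin

section \<open>Virtual knots as signed Gauss codes modulo Reidemeister moves\<close>

text \<open>A symbol of a signed Gauss code: (crossing label, passes over?, positive crossing?).
  A (one-component) virtual knot diagram is a cyclic word of such symbols in which every
  label occurs exactly twice, once over and once under, with the same sign
  (Goussarov-Polyak-Viro Gauss diagrams). Cyclicity is handled by rotation moves.\<close>

type_synonym gsym = "nat \<times> bool \<times> bool"

definition labels :: "gsym list \<Rightarrow> nat set" where
  "labels w = fst ` set w"

definition valid_gauss :: "gsym list \<Rightarrow> bool" where
  "valid_gauss w \<longleftrightarrow> (\<forall>c \<in> labels w. \<exists>s.
      filter (\<lambda>x. fst x = c) w = [(c, True, s), (c, False, s)] \<or>
      filter (\<lambda>x. fst x = c) w = [(c, False, s), (c, True, s)])"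

text \<open>Top strand T crosses middle strand M at x and bottom
  strand B at y; M crosses B at z. The three adjacent segments of the code
  along T, M, B; the realizable configurations are exactly those with orders determined by
  the signs and a parameter mu; the move flips mu (reverses all three segments).\<close>

definition tri_T :: "bool \<Rightarrow> nat \<Rightarrow> nat \<Rightarrow> nat \<Rightarrow> bool \<Rightarrow> bool \<Rightarrow> bool \<Rightarrow> gsym list" where
  "tri_T mu x y z sx sy sz =
     (if mu = sz then [(x, True, sx), (y, True, sy)] else [(y, True, sy), (x, True, sx)])"

definition tri_M :: "bool \<Rightarrow> nat \<Rightarrow> nat \<Rightarrow> nat \<Rightarrow> bool \<Rightarrow> bool \<Rightarrow> bool \<Rightarrow> gsym list" where
  "tri_M mu x y z sx sy sz =
     (if mu = sy then [(x, False, sx), (z, True, sz)] else [(z, True, sz), (x, False, sx)])"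

definition tri_B :: "bool \<Rightarrow> nat \<Rightarrow> nat \<Rightarrow> nat \<Rightarrow> bool \<Rightarrow> bool \<Rightarrow> bool \<Rightarrow> gsym list" where
  "tri_B mu x y z sx sy sz =
     (if mu = sx then [(y, False, sy), (z, False, sz)] else [(z, False, sz), (y, False, sy)])"

inductive gmove :: "gsym list \<Rightarrow> gsym list \<Rightarrow> bool" where
  rot: "gmove w (rotate1 w)"
| rename: "inj_on f (labels w) \<Longrightarrow> gmove w (map (\<lambda>(c, ov, s). (f c, ov, s)) w)"
| R1: "gmove (u @ v) (u @ [(c, ov, s), (c, \<not> ov, s)] @ v)"
| R2: "a \<noteq> b \<Longrightarrow> X \<in> {[(a, False, s), (b, False, \<not> s)], [(b, False, \<not> s), (a, False, s)]} \<Longrightarrow>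
       gmove (u1 @ u2 @ u3) (u1 @ [(a, True, s), (b, True, \<not> s)] @ u2 @ X @ u3)"
| R3a: "distinct [x, y, z] \<Longrightarrow>
       gmove (u1 @ tri_T mu x y z sx sy sz @ u2 @ tri_M mu x y z sx sy sz @ u3 @ tri_B mu x y z sx sy sz @ u4)
             (u1 @ tri_T (\<not> mu) x y z sx sy sz @ u2 @ tri_M (\<not> mu) x y z sx sy sz @ u3 @ tri_B (\<not> mu) x y z sx sy sz @ u4)"
| R3b: "distinct [x, y, z] \<Longrightarrow>
       gmove (u1 @ tri_T mu x y z sx sy sz @ u2 @ tri_B mu x y z sx sy sz @ u3 @ tri_M mu x y z sx sy sz @ u4)
             (u1 @ tri_T (\<not> mu) x y z sx sy sz @ u2 @ tri_B (\<not> mu) x y z sx sy sz @ u3 @ tri_M (\<not> mu) x y z sx sy sz @ u4)"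

definition gstep :: "gsym list \<Rightarrow> gsym list \<Rightarrow> bool" where
  "gstep w w' \<longleftrightarrow> valid_gauss w \<and> valid_gauss w' \<and> gmove w w'"

definition gauss_equiv :: "gsym list \<Rightarrow> gsym list \<Rightarrow> bool" where
  "gauss_equiv = equivclp gstep"

datatype side = Nth | Est | Sth | Wst

datatype tile = T0 | T1 | T2 | T3 | T4 | T5 | T6 | T7 | T8 | T9 | T10

text \<open>Strands of a tile, each given by the two sides whose midpoints it joins.
  T9: vertical strand over; T10: horizontal strand over.\<close>
fun tile_strands :: "tile \<Rightarrow> side set set" where
  "tile_strands T0 = {}"
| "tile_strands T1 = {{Wst, Sth}}"
| "tile_strands T2 = {{Sth, Est}}"
| "tile_strands T3 = {{Est, Nth}}"
| "tile_strands T4 = {{Nth, Wst}}"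
| "tile_strands T5 = {{Wst, Est}}"
| "tile_strands T6 = {{Nth, Sth}}"
| "tile_strands T7 = {{Wst, Nth}, {Sth, Est}}"
| "tile_strands T8 = {{Wst, Sth}, {Nth, Est}}"
| "tile_strands T9 = {{Wst, Est}, {Nth, Sth}}"
| "tile_strands T10 = {{Wst, Est}, {Nth, Sth}}"

text \<open>Tiles are indexed (i,j), row i < m (top to bottom), column j < n. A port (i,j,s) is
  the side s of tile (i,j). Boundary unit edges are the ports facing outwards.\<close>

type_synonym port = "nat \<times> nat \<times> side"

definition bedges :: "nat \<Rightarrow> nat \<Rightarrow> port set" where
  "bedges m n = {(0, j, Nth) | j. j < n} \<union> {(m - 1, j, Sth) | j. j < n}
              \<union> {(i, 0, Wst) | i. i < m} \<union> {(i, n - 1, Est) | i. i < m}"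

text \<open>A virtual rectangular mosaic: an m x n array of tiles with a pairing (fixed-point free
  involution) of the boundary edges; each pair is glued orientation-reversingly with respect
  to the boundary orientation, which is exactly the condition for the closure to be orientable.\<close>
definition virtual_mosaic :: "nat \<Rightarrow> nat \<Rightarrow> (nat \<Rightarrow> nat \<Rightarrow> tile) \<Rightarrow> (port \<Rightarrow> port) \<Rightarrow> bool" where
  "virtual_mosaic m n g P \<longleftrightarrow> 0 < m \<and> 0 < n \<and>
     (\<forall>e \<in> bedges m n. P e \<in> bedges m n \<and> P e \<noteq> e \<and> P (P e) = e)"

fun link :: "nat \<Rightarrow> nat \<Rightarrow> (port \<Rightarrow> port) \<Rightarrow> port \<Rightarrow> port" where
  "link m n P (i, j, s) =
     (if (i, j, s) \<in> bedges m n then P (i, j, s)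
      else (case s of Nth \<Rightarrow> (i - 1, j, Sth) | Sth \<Rightarrow> (i + 1, j, Nth)
                    | Wst \<Rightarrow> (i, j - 1, Est) | Est \<Rightarrow> (i, j + 1, Wst)))"

text \<open>A passage (i,j,a,b): traversal of a strand of tile (i,j) entering at side a, leaving at b.\<close>
type_synonym passage = "nat \<times> nat \<times> side \<times> side"

fun p_tile :: "passage \<Rightarrow> nat \<times> nat" where "p_tile (i, j, a, b) = (i, j)"
fun p_entry :: "passage \<Rightarrow> port" where "p_entry (i, j, a, b) = (i, j, a)"
fun p_exit :: "passage \<Rightarrow> port" where "p_exit (i, j, a, b) = (i, j, b)"
fun p_strand :: "passage \<Rightarrow> nat \<times> nat \<times> side set" where "p_strand (i, j, a, b) = (i, j, {a, b})"
fun p_out :: "passage \<Rightarrow> side" where "p_out (i, j, a, b) = b"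

definition strands :: "nat \<Rightarrow> nat \<Rightarrow> (nat \<Rightarrow> nat \<Rightarrow> tile) \<Rightarrow> (nat \<times> nat \<times> side set) set" where
  "strands m n g = {(i, j, st) | i j st. i < m \<and> j < n \<and> st \<in> tile_strands (g i j)}"

text \<open>The diagram D on the closure is a knot, traversed (with an orientation) by the cyclic
  list of passages ps: consecutive passages are joined on the closure, and every strand of
  every tile is traversed exactly once. (This also forces all strand endpoints to be matched.)\<close>
definition knot_traversal ::
  "nat \<Rightarrow> nat \<Rightarrow> (nat \<Rightarrow> nat \<Rightarrow> tile) \<Rightarrow> (port \<Rightarrow> port) \<Rightarrow> passage list \<Rightarrow> bool" where
  "knot_traversal m n g P ps \<longleftrightarrow> ps \<noteq> [] \<and>
     distinct (map p_strand ps) \<and> set (map p_strand ps) = strands m n g \<and>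
     (\<forall>k < length ps. link m n P (p_exit (ps ! k)) = p_entry (ps ! ((k + 1) mod length ps)))"

definition is_crossing :: "tile \<Rightarrow> bool" where
  "is_crossing t \<longleftrightarrow> t = T9 \<or> t = T10"

definition horizontal :: "passage \<Rightarrow> bool" where
  "horizontal p \<longleftrightarrow> p_out p \<in> {Wst, Est}"

text \<open>Direction components at crossing tile (i,j) (x to the right, y upward = north).\<close>
definition hdir :: "passage list \<Rightarrow> nat \<times> nat \<Rightarrow> int" where
  "hdir ps c = (if p_out (the (find (\<lambda>q. p_tile q = c \<and> horizontal q) ps)) = Est then 1 else -1)"

definition vdir :: "passage list \<Rightarrow> nat \<times> nat \<Rightarrow> int" where
  "vdir ps c = (if p_out (the (find (\<lambda>q. p_tile q = c \<and> \<not> horizontal q) ps)) = Nth then 1 else -1)"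

text \<open>Sign of a crossing: sign of det(over direction, under direction), the closure being
  oriented by the orientation of the plane containing the tiles.\<close>
definition crossing_positive :: "(nat \<Rightarrow> nat \<Rightarrow> tile) \<Rightarrow> passage list \<Rightarrow> nat \<times> nat \<Rightarrow> bool" where
  "crossing_positive g ps c \<longleftrightarrow>
     (if g (fst c) (snd c) = T10 then hdir ps c * vdir ps c > 0 else - (hdir ps c * vdir ps c) > 0)"

definition passes_over :: "(nat \<Rightarrow> nat \<Rightarrow> tile) \<Rightarrow> passage \<Rightarrow> bool" where
  "passes_over g p \<longleftrightarrow>
     (g (fst (p_tile p)) (snd (p_tile p)) = T10 \<and> horizontal p) \<or>
     (g (fst (p_tile p)) (snd (p_tile p)) = T9 \<and> \<not> horizontal p)"

definition mosaic_gauss :: "nat \<Rightarrow> (nat \<Rightarrow> nat \<Rightarrow> tile) \<Rightarrow> passage list \<Rightarrow> gsym list" where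
  "mosaic_gauss n g ps =
     map (\<lambda>p. (fst (p_tile p) * n + snd (p_tile p), passes_over g p, crossing_positive g ps (p_tile p)))
       (filter (\<lambda>p. is_crossing (g (fst (p_tile p)) (snd (p_tile p)))) ps)"

definition represents :: "nat \<Rightarrow> nat \<Rightarrow> (nat \<Rightarrow> nat \<Rightarrow> tile) \<Rightarrow> (port \<Rightarrow> port) \<Rightarrow> gsym list \<Rightarrow> bool" where
  "represents m n g P K \<longleftrightarrow> virtual_mosaic m n g P \<and>
     (\<exists>ps. knot_traversal m n g P ps \<and> gauss_equiv (mosaic_gauss n g ps) K)"

end

(*
  Crossing c of a signed Gauss code gets the tiles T2, T10, T1 in columns 3c, 3c+1, 3c+2 of a
  single row. The over-passage of c enters through the bottom of column 3c, runs eastwards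
  through T10 and leaves through the bottom of column 3c+2; the under-passage runs vertically
  through column 3c+1, upwards exactly when c is positive, so that the crossing in T10 has the
  sign of c. Gluing the exit edge of each passage to the entry edge of the next one in the code
  (cyclically), the two top edges of each block to each other, top to bottom in blank columns,
  and the two ends of the row to each other gives an orientable closure carrying a knot whose
  Gauss code is K with every label c renamed to 3c+1, one renaming move away from K.
  The empty code is the trivial knot, drawn on a single T6 tile.
*)

theory Submission
  imports Defs "HOL-Combinatorics.Cycles"
begin

section \<open>Lists and cyclic successors\<close>

lemma find_eq_SomeI:
  assumes "x \<in> set xs" "P x" "\<And>y. y \<in> set xs \<Longrightarrow> P y \<Longrightarrow> y = x"
  shows "find P xs = Some x"
  using assms
proof (induction xs)
  case (Cons a xs)
  show ?case
  proof (cases "P a")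
    case True
    then show ?thesis using Cons.prems(3)[of a] by simp
  next
    case False
    have "find P xs = Some x"
    proof (rule Cons.IH)
      show "x \<in> set xs" using Cons.prems(1,2) False by auto
      show "P x" by (fact Cons.prems(2))
      show "y = x" if "y \<in> set xs" "P y" for y
        using that by (intro Cons.prems(3)) simp_all
    qed
    then show ?thesis using False by simp
  qed
qed simp

lemma distinct_if_distinct_fibres:
  assumes "\<forall>x\<in>set xs. distinct (filter (\<lambda>y. f y = f x) xs)"
  shows "distinct xs"
  using assms
proof (induction xs)
  case (Cons a xs)
  have "a \<notin> set xs"
    using Cons.prems by (auto simp: filter_empty_conv)
  moreover have "\<forall>x\<in>set xs. distinct (filter (\<lambda>y. f y = f x) xs)"
    using Cons.prems by (auto split: if_splits)
  ultimately show ?case using Cons.IH by simp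
qed simp

lemma successively_concat_map:
  assumes "\<forall>x\<in>set xs. B x \<noteq> [] \<and> successively R (B x)"
    and "successively (\<lambda>x y. R (last (B x)) (hd (B y))) xs"
  shows "successively R (concat (map B xs))"
  using assms
proof (induction xs rule: induct_list012)
  case (3 x y zs)
  then have "successively R (concat (map B (y # zs)))" by simp
  with 3 show ?case by (simp add: successively_append_iff)
qed simp_all

lemma last_concat_map:
  "xs \<noteq> [] \<Longrightarrow> \<forall>x\<in>set xs. B x \<noteq> [] \<Longrightarrow> last (concat (map B xs)) = last (B (last xs))"
  by (induction xs) auto

lemma distinct_map_concat_map:
  assumes "\<forall>x\<in>set xs. distinct (map h (B x)) \<and> (\<forall>q\<in>set (B x). k (h q) = key x)"
    and "distinct (map key xs)"
  shows "distinct (map h (concat (map B xs)))"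
  using assms
proof (induction xs)
  case (Cons x xs)
  have "h q \<noteq> h q'" if "q \<in> set (B x)" "y \<in> set xs" "q' \<in> set (B y)" for q y q'
  proof
    assume "h q = h q'"
    then have "key x = key y"
      using Cons.prems(1) that by (metis list.set_intros)
    moreover have "key x \<notin> key ` set xs"
      using Cons.prems(2) by simp
    ultimately show False using that(2) by blast
  qed
  then have "set (map h (B x)) \<inter> set (map h (concat (map B xs))) = {}" by fastforce
  with Cons show ?case by simp
qed simp

lemma cyclically_adjacent_if_successively:
  assumes "xs \<noteq> []" "successively R xs" "R (last xs) (hd xs)"
  shows "\<forall>k < length xs. R (xs ! k) (xs ! (Suc k mod length xs))"
proof (intro allI impI)
  fix k assume k: "k < length xs"
  show "R (xs ! k) (xs ! (Suc k mod length xs))"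
  proof (cases "Suc k < length xs")
    case True
    then show ?thesis using successively_nth[OF assms(2)] by simp
  next
    case False
    then have "k = length xs - 1" using k by simp
    then show ?thesis using assms(1,3) k by (simp add: last_conv_nth hd_conv_nth)
  qed
qed

lemma cycle_of_list_nth:
  assumes "distinct xs" "i < length xs"
  shows "cycle_of_list xs (xs ! i) = xs ! (Suc i mod length xs)"
proof -
  have "map (cycle_of_list xs) xs = rotate1 xs"
    using cyclic_rotation[OF assms(1), of 1] by simp
  then show ?thesis
    using assms(2) nth_rotate1 by (metis nth_map)
qed

lemma successively_cycle_of_list:
  "distinct xs \<Longrightarrow> successively (\<lambda>x y. y = cycle_of_list xs x) xs"
  by (simp add: successively_conv_nth cycle_of_list_nth)

lemma cycle_of_list_last:
  "distinct xs \<Longrightarrow> xs \<noteq> [] \<Longrightarrow> cycle_of_list xs (last xs) = hd xs"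
  by (simp add: last_conv_nth hd_conv_nth cycle_of_list_nth)

section \<open>Signed Gauss codes\<close>

lemma valid_gauss_label_filter:
  assumes "valid_gauss K" "(c, ov, s) \<in> set K"
  shows "filter (\<lambda>x. fst x = c) K = [(c, True, s), (c, False, s)] \<or>
         filter (\<lambda>x. fst x = c) K = [(c, False, s), (c, True, s)]"
proof -
  have "c \<in> labels K" using assms(2) unfolding labels_def by force
  then obtain s' where s': "filter (\<lambda>x. fst x = c) K = [(c, True, s'), (c, False, s')] \<or>
         filter (\<lambda>x. fst x = c) K = [(c, False, s'), (c, True, s')]"
    using assms(1) unfolding valid_gauss_def by blast
  have "(c, ov, s) \<in> set (filter (\<lambda>x. fst x = c) K)" using assms(2) by simp
  then have "(c, ov, s) \<in> {(c, True, s'), (c, False, s')}" using s' by (elim disjE) auto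
  then show ?thesis using s' by blast
qed

lemma valid_gauss_label_occurrences:
  assumes "valid_gauss K" "(c, ov, s) \<in> set K"
  shows "{x \<in> set K. fst x = c} = {(c, True, s), (c, False, s)}"
proof -
  have "set (filter (\<lambda>x. fst x = c) K) = {(c, True, s), (c, False, s)}"
    using valid_gauss_label_filter[OF assms] by (elim disjE) (simp_all add: insert_commute)
  then show ?thesis by simp
qed

lemma valid_gauss_same_sign:
  assumes "valid_gauss K" "(c, ov, s) \<in> set K" "(c, ov', s') \<in> set K"
  shows "s' = s"
proof -
  have "(c, ov', s') \<in> {x \<in> set K. fst x = c}" using assms(3) by simp
  then have "(c, ov', s') \<in> {(c, True, s), (c, False, s)}"
    unfolding valid_gauss_label_occurrences[OF assms(1,2)] .
  then show ?thesis by blast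
qed

lemma valid_gauss_both_passages:
  assumes "valid_gauss K" "(c, ov, s) \<in> set K"
  shows "(c, ov', s) \<in> set K"
  using valid_gauss_label_occurrences[OF assms] by (cases ov') auto

lemma distinct_valid_gauss:
  assumes "valid_gauss K"
  shows "distinct K"
proof (rule distinct_if_distinct_fibres[where f = fst], intro ballI)
  fix x assume "x \<in> set K"
  then show "distinct (filter (\<lambda>y. fst y = fst x) K)"
    using valid_gauss_label_filter[OF assms, of "fst x" "fst (snd x)" "snd (snd x)"] by auto
qed

definition label_sign :: "gsym list \<Rightarrow> nat \<Rightarrow> bool" where
  "label_sign K c = (THE s. (c, True, s) \<in> set K)"

lemma label_sign_eq:
  assumes "valid_gauss K" "(c, ov, s) \<in> set K"
  shows "label_sign K c = s"
  unfolding label_sign_def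
proof (rule the_equality)
  show "(c, True, s) \<in> set K" using valid_gauss_both_passages[OF assms] .
  show "s' = s" if "(c, True, s') \<in> set K" for s'
    using valid_gauss_same_sign[OF assms that] .
qed

lemma valid_gauss_symbolE:
  assumes "valid_gauss K" "x \<in> set K"
  obtains c ov where "x = (c, ov, label_sign K c)" "c \<in> labels K"
  using assms label_sign_eq[OF assms(1)] unfolding labels_def by (cases x) force

lemma set_valid_gauss:
  assumes "valid_gauss K"
  shows "set K = (\<Union>c\<in>labels K. {(c, True, label_sign K c), (c, False, label_sign K c)})"
proof
  show "set K \<subseteq> (\<Union>c\<in>labels K. {(c, True, label_sign K c), (c, False, label_sign K c)})"
    by (auto elim!: valid_gauss_symbolE[OF assms] intro: rev_bexI)
  show "(\<Union>c\<in>labels K. {(c, True, label_sign K c), (c, False, label_sign K c)}) \<subseteq> set K"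
    unfolding labels_def using assms label_sign_eq valid_gauss_both_passages by fastforce
qed

definition relabel_gauss :: "(nat \<Rightarrow> nat) \<Rightarrow> gsym list \<Rightarrow> gsym list" where
  "relabel_gauss f = map (\<lambda>(c, ov, s). (f c, ov, s))"

lemma valid_gauss_relabel:
  assumes "valid_gauss K" "inj_on f (labels K)"
  shows "valid_gauss (relabel_gauss f K)"
  unfolding valid_gauss_def
proof
  let ?F = "\<lambda>(c::nat, ov::bool, s::bool). (f c, ov, s)"
  fix c' assume "c' \<in> labels (relabel_gauss f K)"
  then obtain c ov s where x: "(c, ov, s) \<in> set K" "c' = f c"
    unfolding labels_def relabel_gauss_def by auto
  have "c \<in> labels K" using x(1) unfolding labels_def by force
  then have "filter (\<lambda>y. fst y = c') (relabel_gauss f K) = map ?F (filter (\<lambda>y. fst y = c) K)"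
    unfolding relabel_gauss_def filter_map o_def using x(2) assms(2)
    by (intro arg_cong[where f = "map ?F"] filter_cong) (auto simp: labels_def inj_on_def split: prod.splits)
  then show "\<exists>s. filter (\<lambda>y. fst y = c') (relabel_gauss f K) = [(c', True, s), (c', False, s)] \<or>
          filter (\<lambda>y. fst y = c') (relabel_gauss f K) = [(c', False, s), (c', True, s)]"
    using valid_gauss_label_filter[OF assms(1) x(1)] x(2) by auto
qed

lemma gauss_equiv_relabel:
  assumes "valid_gauss K" "inj_on f (labels K)"
  shows "gauss_equiv (relabel_gauss f K) K"
proof -
  have "gstep K (relabel_gauss f K)"
    unfolding gstep_def relabel_gauss_def
    using assms valid_gauss_relabel[OF assms] gmove.rename[OF assms(2)]
    by (simp add: relabel_gauss_def)
  then show ?thesis unfolding gauss_equiv_def by (blast intro: equivclp_sym)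
qed

section \<open>The row mosaic of a Gauss code\<close>

fun crossing_passage :: "gsym \<Rightarrow> passage" where
  "crossing_passage (c, ov, s) =
     (0, 3*c+1, if ov then Wst else if s then Sth else Nth, if ov then Est else if s then Nth else Sth)"

fun symbol_passages :: "gsym \<Rightarrow> passage list" where
  "symbol_passages (c, True, s) = [(0, 3*c, Sth, Est), crossing_passage (c, True, s), (0, 3*c+2, Wst, Sth)]"
| "symbol_passages (c, False, s) = [crossing_passage (c, False, s)]"

definition symbol_entry :: "gsym \<Rightarrow> port" where
  "symbol_entry x = p_entry (hd (symbol_passages x))"

definition symbol_exit :: "gsym \<Rightarrow> port" where
  "symbol_exit x = p_exit (last (symbol_passages x))"

lemma symbol_entry_exit_simps [simp]:
  "symbol_entry (c, True, s) = (0, 3*c, Sth)"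
  "symbol_exit (c, True, s) = (0, 3*c+2, Sth)"
  "symbol_entry (c, False, s) = (0, 3*c+1, if s then Sth else Nth)"
  "symbol_exit (c, False, s) = (0, 3*c+1, if s then Nth else Sth)"
  by (simp_all add: symbol_entry_def symbol_exit_def)

definition row_width :: "gsym list \<Rightarrow> nat" where
  "row_width K = 3 * Suc (Max (labels K))"

definition row_tiles :: "gsym list \<Rightarrow> nat \<Rightarrow> nat \<Rightarrow> tile" where
  "row_tiles K = (\<lambda>i j. if j div 3 \<in> labels K then
       (if j mod 3 = 0 then T2 else if j mod 3 = 1 then T10 else T1) else T0)"

definition row_pairing :: "gsym list \<Rightarrow> port \<Rightarrow> port" where
  "row_pairing K = (\<lambda>(i, j, side). let c = j div 3; s = label_sign K c;
       glue_next = \<lambda>x. symbol_entry (cycle_of_list K x);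
       glue_prev = \<lambda>x. symbol_exit (inv (cycle_of_list K) x) in
     case side of
       Wst \<Rightarrow> (0, row_width K - 1, Est)
     | Est \<Rightarrow> (0, 0, Wst)
     | Nth \<Rightarrow> if c \<notin> labels K then (0, j, Sth) else if j mod 3 = 0 then (0, j + 2, Nth)
              else if j mod 3 = 2 then (0, j - 2, Nth)
              else if s then glue_next (c, False, s) else glue_prev (c, False, s)
     | Sth \<Rightarrow> if c \<notin> labels K then (0, j, Nth) else if j mod 3 = 0 then glue_prev (c, True, s)
              else if j mod 3 = 2 then glue_next (c, True, s)
              else if s then glue_prev (c, False, s) else glue_next (c, False, s))"

definition row_passages :: "gsym list \<Rightarrow> passage list" where
  "row_passages K = concat (map symbol_passages K)"

lemma div_mod_3_simps [simp]:
  "(3*c) div 3 = (c::nat)" "Suc (3*c) div 3 = c" "Suc (Suc (3*c)) div 3 = c"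
  "(3*c) mod 3 = (0::nat)" "Suc (3*c) mod 3 = 1" "Suc (Suc (3*c)) mod 3 = 2"
  by presburger+

lemma mult_3_neq_simps [simp]:
  "3*d \<noteq> Suc (3*(c::nat))" "3*d \<noteq> Suc (Suc (3*(c::nat)))"
  "Suc (3*d) \<noteq> 3*(c::nat)" "Suc (Suc (3*d)) \<noteq> 3*(c::nat)"
  by presburger+

lemma column_bound: "c \<in> labels K \<Longrightarrow> 3*c + 2 < row_width K"
proof -
  assume "c \<in> labels K"
  then have "c \<le> Max (labels K)" unfolding labels_def by simp
  then show ?thesis unfolding row_width_def by simp
qed

lemma row_tiles_column:
  assumes "c \<in> labels K"
  shows "row_tiles K i (3*c) = T2" "row_tiles K i (3*c + 1) = T10" "row_tiles K i (3*c + 2) = T1"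
  using assms by (simp_all add: row_tiles_def)

lemma crossing_passage_in_symbol_passages: "crossing_passage x \<in> set (symbol_passages x)"
proof -
  obtain c ov s where "x = (c, ov, s)" by (cases x)
  then show ?thesis by (cases ov) (simp_all del: crossing_passage.simps)
qed

lemma horizontal_crossing_passage: "horizontal (crossing_passage (c, ov, s)) = ov"
  by (simp add: horizontal_def)

lemma symbol_passages_nonempty: "symbol_passages x \<noteq> []"
  by (cases x) (auto elim: symbol_passages.elims)

definition column_strands :: "nat \<Rightarrow> (nat \<times> nat \<times> side set) set" where
  "column_strands c =
     {(0, 3*c, {Sth, Est}), (0, 3*c+1, {Wst, Est}), (0, 3*c+1, {Nth, Sth}), (0, 3*c+2, {Wst, Sth})}"

lemma strands_row: "strands 1 (row_width K) (row_tiles K) = (\<Union>c\<in>labels K. column_strands c)"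
proof
  show "strands 1 (row_width K) (row_tiles K) \<subseteq> (\<Union>c\<in>labels K. column_strands c)"
  proof
    fix t assume "t \<in> strands 1 (row_width K) (row_tiles K)"
    then obtain j st where t: "t = (0, j, st)" "st \<in> tile_strands (row_tiles K 0 j)"
      unfolding strands_def by auto
    define c where "c = j div 3"
    have c: "c \<in> labels K" using t unfolding c_def by (auto simp: row_tiles_def split: if_splits)
    have "j = 3*c \<or> j = 3*c + 1 \<or> j = 3*c + 2" unfolding c_def by presburger
    then have "t \<in> column_strands c"
      using t c by (elim disjE) (auto simp: row_tiles_def column_strands_def)
    then show "t \<in> (\<Union>c\<in>labels K. column_strands c)" using c by blast
  qed
  show "(\<Union>c\<in>labels K. column_strands c) \<subseteq> strands 1 (row_width K) (row_tiles K)"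
  proof (intro UN_least subsetI)
    fix c t assume c: "c \<in> labels K" and t: "t \<in> column_strands c"
    then show "t \<in> strands 1 (row_width K) (row_tiles K)"
      using column_bound[OF c] row_tiles_column[OF c]
      unfolding column_strands_def strands_def by auto
  qed
qed

lemma symbol_strands:
  "p_strand ` set (symbol_passages (c, True, s)) \<union> p_strand ` set (symbol_passages (c, False, s)) =
     column_strands c"
  by (cases s) (auto simp: column_strands_def insert_commute)

locale gauss_code =
  fixes K :: "gsym list"
  assumes valid: "valid_gauss K" and nonempty: "K \<noteq> []"
begin

lemma distinct_symbols: "distinct K"
  using distinct_valid_gauss[OF valid] .

lemmas symbolE = valid_gauss_symbolE[OF valid]

lemma cycle_of_list_in_set: "x \<in> set K \<Longrightarrow> cycle_of_list K x \<in> set K"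
  by (simp add: permutes_in_image[OF cycle_permutes])

lemma inv_cycle_of_list_in_set: "x \<in> set K \<Longrightarrow> inv (cycle_of_list K) x \<in> set K"
  by (simp add: permutes_in_image[OF permutes_inv[OF cycle_permutes]])

lemma row_pairing_symbol_exit:
  assumes "x \<in> set K"
  shows "row_pairing K (symbol_exit x) = symbol_entry (cycle_of_list K x)"
proof -
  obtain c ov where "x = (c, ov, label_sign K c)" "c \<in> labels K" using symbolE[OF assms] .
  then show ?thesis by (cases ov; cases "label_sign K c") (simp_all add: row_pairing_def Let_def)
qed

lemma row_pairing_symbol_entry:
  assumes "x \<in> set K"
  shows "row_pairing K (symbol_entry x) = symbol_exit (inv (cycle_of_list K) x)"
proof -
  obtain c ov where "x = (c, ov, label_sign K c)" "c \<in> labels K" using symbolE[OF assms] .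
  then show ?thesis by (cases ov; cases "label_sign K c") (simp_all add: row_pairing_def Let_def)
qed

lemma symbol_entry_neq_exit:
  assumes "x \<in> set K" "y \<in> set K"
  shows "symbol_entry y \<noteq> symbol_exit x"
proof -
  obtain c ov where x: "x = (c, ov, label_sign K c)" using symbolE[OF assms(1)] .
  obtain d ov' where y: "y = (d, ov', label_sign K d)" using symbolE[OF assms(2)] .
  show ?thesis using x y by (cases ov; cases ov'; cases "label_sign K c") auto
qed

lemma symbol_ports_in_bedges:
  assumes "x \<in> set K"
  shows "symbol_entry x \<in> bedges 1 (row_width K)" "symbol_exit x \<in> bedges 1 (row_width K)"
proof -
  obtain c ov where "x = (c, ov, label_sign K c)" "c \<in> labels K" using symbolE[OF assms] .
  then show "symbol_entry x \<in> bedges 1 (row_width K)" "symbol_exit x \<in> bedges 1 (row_width K)"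
    by (cases ov; cases "label_sign K c"; auto simp: bedges_def dest: column_bound)+
qed

lemma row_boundary_cases:
  assumes "e \<in> bedges 1 (row_width K)"
  obtains (entry) x where "x \<in> set K" "e = symbol_entry x"
    | (exit) x where "x \<in> set K" "e = symbol_exit x"
    | (ends) "e = (0, 0, Wst) \<or> e = (0, row_width K - 1, Est)"
    | (blank) j where "j div 3 \<notin> labels K" "j < row_width K" "e = (0, j, Nth) \<or> e = (0, j, Sth)"
    | (cap) c where "c \<in> labels K" "e = (0, 3*c, Nth) \<or> e = (0, 3*c+2, Nth)"
proof -
  from assms obtain j side where e: "e = (0, j, side)" and j: "side \<in> {Nth, Sth} \<Longrightarrow> j < row_width K"
    and ends_if: "side \<notin> {Nth, Sth} \<Longrightarrow> e = (0, 0, Wst) \<or> e = (0, row_width K - 1, Est)"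
    unfolding bedges_def by auto
  show thesis
  proof (cases "side \<in> {Nth, Sth}")
    case False
    then show thesis using ends_if ends by blast
  next
    case side: True
    define c where "c = j div 3"
    show thesis
    proof (cases "c \<in> labels K")
      case False
      then show thesis using blank e j side unfolding c_def by blast
    next
      case True
      define s where "s = label_sign K c"
      have K: "(c, True, s) \<in> set K" "(c, False, s) \<in> set K"
        using True set_valid_gauss[OF valid] unfolding s_def by auto
      have "j = 3*c \<or> j = 3*c+1 \<or> j = 3*c+2" unfolding c_def by presburger
      then show thesis
        using side K entry[of "(c, True, s)"] exit[of "(c, True, s)"] entry[of "(c, False, s)"]
          exit[of "(c, False, s)"] cap[OF True] e
        by (cases s) auto
    qed
  qed
qed

lemma virtual_mosaic_row: "virtual_mosaic 1 (row_width K) (row_tiles K) (row_pairing K)"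
proof -
  let ?P = "row_pairing K" and ?B = "bedges 1 (row_width K)"
  have "?P e \<in> ?B \<and> ?P e \<noteq> e \<and> ?P (?P e) = e" if e: "e \<in> ?B" for e
    using e
  proof (cases rule: row_boundary_cases)
    case (entry x)
    let ?y = "inv (cycle_of_list K) x"
    have y: "?y \<in> set K" using inv_cycle_of_list_in_set[OF entry(1)] .
    show ?thesis
      using entry row_pairing_symbol_entry row_pairing_symbol_exit[OF y] symbol_ports_in_bedges(2)[OF y]
        not_sym[OF symbol_entry_neq_exit[OF y entry(1)]] permutes_inverses(1)[OF cycle_permutes[of K]]
      by simp
  next
    case (exit x)
    let ?y = "cycle_of_list K x"
    have y: "?y \<in> set K" using cycle_of_list_in_set[OF exit(1)] .
    show ?thesis
      using exit row_pairing_symbol_exit row_pairing_symbol_entry[OF y] symbol_ports_in_bedges(1)[OF y]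
        symbol_entry_neq_exit[OF exit(1) y] permutes_inverses(2)[OF cycle_permutes[of K]]
      by simp
  next
    case ends
    then show ?thesis by (auto simp: row_pairing_def row_width_def bedges_def)
  next
    case (blank j)
    then show ?thesis by (auto simp: row_pairing_def bedges_def)
  next
    case (cap c)
    then show ?thesis using column_bound[OF cap(1)] by (auto simp: row_pairing_def bedges_def)
  qed
  then show ?thesis unfolding virtual_mosaic_def by (simp add: row_width_def)
qed

lemma row_passages_nonempty: "row_passages K \<noteq> []"
  using nonempty symbol_passages_nonempty by (cases K) (auto simp: row_passages_def)

lemma link_symbol_exit:
  assumes "x \<in> set K"
  shows "link 1 (row_width K) (row_pairing K) (symbol_exit x) = symbol_entry (cycle_of_list K x)"
proof -
  obtain i j side where "symbol_exit x = (i, j, side)" by (cases "symbol_exit x")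
  then show ?thesis
    using symbol_ports_in_bedges(2)[OF assms] row_pairing_symbol_exit[OF assms] by simp
qed

lemma symbol_passages_linked:
  assumes "x \<in> set K"
  shows "successively (\<lambda>p q. link 1 (row_width K) (row_pairing K) (p_exit p) = p_entry q)
           (symbol_passages x)"
proof -
  obtain c ov where "x = (c, ov, label_sign K c)" "c \<in> labels K" using symbolE[OF assms] .
  then show ?thesis using column_bound[of c K] by (cases ov) (auto simp: bedges_def)
qed

lemma row_passages_linked:
  "\<forall>k < length (row_passages K). link 1 (row_width K) (row_pairing K) (p_exit (row_passages K ! k)) =
      p_entry (row_passages K ! (Suc k mod length (row_passages K)))"
proof (rule cyclically_adjacent_if_successively[OF row_passages_nonempty])
  let ?R = "\<lambda>p q. link 1 (row_width K) (row_pairing K) (p_exit p) = p_entry q"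
  have glued: "?R (last (symbol_passages x)) (hd (symbol_passages (cycle_of_list K x)))"
    if "x \<in> set K" for x
    using link_symbol_exit[OF that] by (simp add: symbol_entry_def symbol_exit_def)
  have "successively (\<lambda>x y. ?R (last (symbol_passages x)) (hd (symbol_passages y))) K"
    using successively_cycle_of_list[OF distinct_symbols] by (rule successively_mono) (use glued in simp)
  then show "successively ?R (row_passages K)"
    unfolding row_passages_def
    by (rule successively_concat_map[rotated]) (intro ballI conjI symbol_passages_nonempty symbol_passages_linked)
  have "last (row_passages K) = last (symbol_passages (last K))"
       "hd (row_passages K) = hd (symbol_passages (hd K))"
    using nonempty symbol_passages_nonempty
    by (simp_all add: row_passages_def last_concat_map hd_concat hd_map)
  then show "?R (last (row_passages K)) (hd (row_passages K))"
    using glued[OF last_in_set[OF nonempty]] cycle_of_list_last[OF distinct_symbols nonempty] by simp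
qed

lemma distinct_row_strands: "distinct (map p_strand (row_passages K))"
proof -
  let ?k = "\<lambda>(i::nat, j, st). (j div 3, st \<noteq> {Nth, Sth})" and ?key = "\<lambda>x::gsym. (fst x, fst (snd x))"
  have blocks: "distinct (map p_strand (symbol_passages x)) \<and>
      (\<forall>q\<in>set (symbol_passages x). ?k (p_strand q) = ?key x)" for x
  proof -
    obtain c ov s where "x = (c, ov, s)" by (cases x)
    then show ?thesis by (cases ov; cases s) (auto simp: insert_commute)
  qed
  have "inj_on ?key (set K)"
  proof (rule inj_onI)
    fix x y assume xy: "x \<in> set K" "y \<in> set K" "?key x = ?key y"
    obtain c ov s where x: "x = (c, ov, s)" by (cases x)
    obtain s' where y: "y = (c, ov, s')" using xy(3) x by (cases y) auto
    have "s' = s" using valid_gauss_same_sign[OF valid] xy(1,2) x y by blast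
    then show "x = y" using x y by simp
  qed
  then have "distinct (map ?key K)"
    using distinct_symbols by (simp add: distinct_map)
  with blocks show ?thesis
    unfolding row_passages_def by (intro distinct_map_concat_map[where k = ?k]) simp_all
qed

lemma set_row_strands: "set (map p_strand (row_passages K)) = strands 1 (row_width K) (row_tiles K)"
proof -
  have "set (map p_strand (row_passages K)) = (\<Union>x\<in>set K. p_strand ` set (symbol_passages x))"
    by (auto simp: row_passages_def)
  also have "\<dots> = (\<Union>c\<in>labels K. p_strand ` set (symbol_passages (c, True, label_sign K c)) \<union>
                                   p_strand ` set (symbol_passages (c, False, label_sign K c)))"
    by (subst set_valid_gauss[OF valid]) (simp only: UN_UN_flatten UN_insert UN_empty Un_empty_right)
  also have "\<dots> = (\<Union>c\<in>labels K. column_strands c)"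
    by (simp only: symbol_strands)
  also have "\<dots> = strands 1 (row_width K) (row_tiles K)"
    by (rule strands_row[symmetric])
  finally show ?thesis .
qed

lemma knot_traversal_row: "knot_traversal 1 (row_width K) (row_tiles K) (row_pairing K) (row_passages K)"
  unfolding knot_traversal_def
  using row_passages_nonempty distinct_row_strands set_row_strands row_passages_linked by simp

lemma crossing_passage_in_row_passages:
  "x \<in> set K \<Longrightarrow> crossing_passage x \<in> set (row_passages K)"
  unfolding row_passages_def set_concat set_map using crossing_passage_in_symbol_passages by blast

lemma passage_at_crossing_tile:
  assumes "q \<in> set (row_passages K)" "p_tile q = (0, 3*c + 1)"
  shows "c \<in> labels K \<and> (\<exists>ov. q = crossing_passage (c, ov, label_sign K c))"
proof -
  obtain x where x: "x \<in> set K" "q \<in> set (symbol_passages x)"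
    using assms(1) by (auto simp: row_passages_def)
  obtain d ov where d: "x = (d, ov, label_sign K d)" "d \<in> labels K" using symbolE[OF x(1)] .
  have "q = crossing_passage x \<or> p_tile q = (0, 3*d) \<or> p_tile q = (0, 3*d + 2)"
    using x(2) d(1) by (cases ov) (auto simp del: crossing_passage.simps)
  then have q: "q = crossing_passage x"
    using assms(2) by auto
  then have "d = c"
    using assms(2) d(1) by simp
  then show ?thesis using q d by blast
qed

lemma find_crossing_passage:
  assumes "c \<in> labels K"
  shows "find (\<lambda>q. p_tile q = (0, 3*c + 1) \<and> horizontal q = ov) (row_passages K) =
           Some (crossing_passage (c, ov, label_sign K c))"
proof (rule find_eq_SomeI)
  have "(c, ov, label_sign K c) \<in> set K"
    using assms set_valid_gauss[OF valid] by (cases ov) auto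
  then show "crossing_passage (c, ov, label_sign K c) \<in> set (row_passages K)"
    by (rule crossing_passage_in_row_passages)
  show "p_tile (crossing_passage (c, ov, label_sign K c)) = (0, 3*c + 1) \<and>
        horizontal (crossing_passage (c, ov, label_sign K c)) = ov"
    by (auto simp: horizontal_def)
  show "q = crossing_passage (c, ov, label_sign K c)"
    if q: "q \<in> set (row_passages K)" "p_tile q = (0, 3*c + 1) \<and> horizontal q = ov" for q
  proof -
    obtain ov' where "q = crossing_passage (c, ov', label_sign K c)"
      using passage_at_crossing_tile[of q c] q by blast
    moreover from this have "ov' = ov" using q(2) horizontal_crossing_passage by metis
    ultimately show ?thesis by simp
  qed
qed

lemma crossing_positive_row:
  assumes "c \<in> labels K"
  shows "crossing_positive (row_tiles K) (row_passages K) (0, 3*c + 1) = label_sign K c"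
proof -
  have "hdir (row_passages K) (0, 3*c + 1) = 1"
    using find_crossing_passage[OF assms, of True] by (simp add: hdir_def)
  moreover have "vdir (row_passages K) (0, 3*c + 1) = (if label_sign K c then 1 else -1)"
    using find_crossing_passage[OF assms, of False] by (simp add: vdir_def)
  ultimately show ?thesis
    using row_tiles_column(2)[OF assms] by (simp add: crossing_positive_def)
qed

lemma mosaic_gauss_row:
  "mosaic_gauss (row_width K) (row_tiles K) (row_passages K) = relabel_gauss (\<lambda>c. 3*c + 1) K"
proof -
  let ?at_crossing = "\<lambda>p. is_crossing (row_tiles K (fst (p_tile p)) (snd (p_tile p)))"
  have filter_block: "filter ?at_crossing (symbol_passages x) = [crossing_passage x]"
    if x: "x \<in> set K" for x
  proof -
    obtain c ov where "x = (c, ov, label_sign K c)" "c \<in> labels K" using symbolE[OF x] .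
    then show ?thesis by (cases ov) (simp_all add: row_tiles_def is_crossing_def)
  qed
  have "filter ?at_crossing (row_passages K) = map crossing_passage K"
    unfolding row_passages_def filter_concat map_map o_def
    using filter_block by (simp del: crossing_passage.simps cong: map_cong)
  moreover have "(fst (p_tile (crossing_passage x)) * row_width K + snd (p_tile (crossing_passage x)),
          passes_over (row_tiles K) (crossing_passage x),
          crossing_positive (row_tiles K) (row_passages K) (p_tile (crossing_passage x))) =
        (case x of (c, ov, s) \<Rightarrow> (3*c + 1, ov, s))" if x: "x \<in> set K" for x
  proof -
    obtain c ov where x: "x = (c, ov, label_sign K c)" "c \<in> labels K" using symbolE[OF x] .
    show ?thesis
      using x crossing_positive_row[OF x(2)] row_tiles_column(2)[OF x(2)]
      by (simp add: passes_over_def horizontal_def)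
  qed
  ultimately show ?thesis
    unfolding mosaic_gauss_def relabel_gauss_def by simp
qed

lemma represents_row: "represents 1 (row_width K) (row_tiles K) (row_pairing K) K"
  unfolding represents_def
  using virtual_mosaic_row knot_traversal_row mosaic_gauss_row
    gauss_equiv_relabel[OF valid, of "\<lambda>c. 3*c + 1"] by (auto simp: inj_on_def)

end

fun opposite_side :: "side \<Rightarrow> side" where
  "opposite_side Nth = Sth" | "opposite_side Sth = Nth" | "opposite_side Wst = Est" | "opposite_side Est = Wst"

lemma represents_trivial_knot:
  "represents 1 1 (\<lambda>_ _. T6) (\<lambda>(i, j, side). (0, 0, opposite_side side)) []"
proof -
  let ?g = "\<lambda>_ _. T6" and ?P = "\<lambda>(i, j, side). (0, 0, opposite_side side)"
  have bedges: "bedges 1 1 = {(0, 0, Nth), (0, 0, Sth), (0, 0, Wst), (0, 0, Est)}"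
    unfolding bedges_def by auto
  have "virtual_mosaic 1 1 ?g ?P"
    unfolding virtual_mosaic_def bedges by auto
  moreover have "strands 1 1 ?g = {(0, 0, {Nth, Sth})}"
    unfolding strands_def by auto
  then have "knot_traversal 1 1 ?g ?P [(0, 0, Sth, Nth)]"
    unfolding knot_traversal_def using bedges by (auto simp: insert_commute)
  moreover have "mosaic_gauss 1 ?g [(0, 0, Sth, Nth)] = []"
    by (simp add: mosaic_gauss_def is_crossing_def)
  ultimately show ?thesis
    unfolding represents_def gauss_equiv_def by auto
qed

theorem mainTheorem2:
  fixes K :: "gsym list"
  assumes "valid_gauss K"
  shows "\<exists>n > 0. \<exists>g P. represents 1 n g P K"
proof (cases "K = []")
  case True
  then show ?thesis using represents_trivial_knot by blast
next
  case False
  interpret gauss_code K using assms False by unfold_locales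
  have "0 < row_width K" by (simp add: row_width_def)
  then show ?thesis using represents_row by blast
qed

end
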